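(* Let $x$ and $y$ be indeterminates that do not commute under multiplication (so $(x+y)^n$ is computed in the free associative algebra generated by $x$ and $y$), and let $n$ be a nonnegative integer. For $0\le k\le n$ and each $\lambda=(\lambda_1,\dots,\lambda_k)\in\mathcal{P}_{k,n-k}$, let $Q^\lambda x^{n-k}y^k$ denote the word obtained from the word $x^{n-k}y^k=\underbrace{x\cdots x}_{n-k}\underbrace{y\cdots y}_{k}$ by applying the product of transpositions $$Q^\lambda:=\prod_{j=1}^k (n-k+j,\; n-k+j-\lambda_j),$$ where applying the transposition $(i,j)$ to a word means swapping its $i$th and $j$th letters, and the factors are applied in the order $j=1$ first, then $j=2$, and so on up to $j=k$ (for $k=0$, $Q^\lambda$ is the identity). Then $$(x+y)^n=\sum_{k=0}^n\sum_{\lambda\in\mathcal{P}_{k,n-k}} Q^\lambda x^{n-k}y^k.$$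
   Context: For nonnegative integers $k$ and $m$, $\mathcal{P}_{k,m}$ denotes the set of integer tuples $(\lambda_1,\dots,\lambda_k)$ with $m\ge\lambda_1\ge\lambda_2\ge\cdots\ge\lambda_k\ge 0$, i.e. partitions with at most $k$ parts, each part at most $m$, padded with zeros to length $k$. ($\mathcal{P}_{0,m}$ consists of the single empty tuple.) For example, with $n-k=5$, $k=3$: $Q^{(3,1,0)}x^5y^3=(8,8)(7,6)(6,3)(xxxxxyyy)=xxyxxyxy$. *)

theory Defs
  imports Main
begin

text \<open>Words are bool lists (False = letter x, True = letter y); an element of the
  algebra is its coefficient function on words (finite support is automatic
  for the elements considered here).\<close>

type_synonym falg = "bool list \<Rightarrow> int"

definition fa_add :: "falg \<Rightarrow> falg \<Rightarrow> falg" where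
  "fa_add f g = (\<lambda>w. f w + g w)"

definition fa_mult :: "falg \<Rightarrow> falg \<Rightarrow> falg" where
  "fa_mult f g = (\<lambda>w. \<Sum>i\<le>length w. f (take i w) * g (drop i w))"

definition fa_word :: "bool list \<Rightarrow> falg" where
  "fa_word u = (\<lambda>w. if w = u then 1 else 0)"

definition fa_one :: falg where
  "fa_one = fa_word []"

definition fa_x :: falg where "fa_x = fa_word [False]"
definition fa_y :: falg where "fa_y = fa_word [True]"

fun fa_pow :: "falg \<Rightarrow> nat \<Rightarrow> falg" where
  "fa_pow f 0 = fa_one"
| "fa_pow f (Suc n) = fa_mult f (fa_pow f n)"

text \<open>P_{k,m}: partitions with at most k parts, each at most m, padded to length k.\<close>
definition partitions_km :: "nat \<Rightarrow> nat \<Rightarrow> nat list set" where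
  "partitions_km k m = {l. length l = k \<and> sorted_wrt (\<ge>) l \<and> (\<forall>a\<in>set l. a \<le> m)}"

text \<open>Swap the i-th and j-th letters (1-indexed).\<close>
definition swap_letters :: "'a list \<Rightarrow> nat \<Rightarrow> nat \<Rightarrow> 'a list" where
  "swap_letters w i j = w[i - 1 := w ! (j - 1), j - 1 := w ! (i - 1)]"

text \<open>Apply Q^lambda = prod_{j=1}^k (n-k+j, n-k+j-lambda_j), factor j=1 applied first.\<close>
definition apply_Q :: "nat \<Rightarrow> nat \<Rightarrow> nat list \<Rightarrow> 'a list \<Rightarrow> 'a list" where
  "apply_Q n k lam w =
     fold (\<lambda>j v. swap_letters v (n - k + j) (n - k + j - lam ! (j - 1))) [1..<k+1] w"

definition base_word :: "nat \<Rightarrow> nat \<Rightarrow> bool list" where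
  "base_word n k = replicate (n - k) False @ replicate k True"

end

(* Both sides are sums of words of length n, each with coefficient 1. Applying the factors of
   Q^lambda in turn to x^(n-k) y^k moves the y at position n-k+j to q_j = n-k+j-lambda_j,
   and since lambda is weakly decreasing these targets are strictly increasing and never disturb
   the y's already placed; so Q^lambda x^(n-k) y^k is the word with its y's exactly at
   {q_1 < ... < q_k}. Conversely a k-subset {q_1 < ... < q_k} of the n positions comes from
   exactly one lambda in P_{k,n-k}, namely lambda_j = n-k+j-q_j. Hence (k, lambda) maps
   bijectively onto the words of length n. *)

theory Submission
  imports Defs
begin

lemma sorted_wrt_less_nth_gap:
  assumes "sorted_wrt (<) (xs :: nat list)" "i \<le> j" "j < length xs"
  shows "xs ! i + (j - i) \<le> xs ! j"
  using assms(2,3)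
proof (induction j)
  case (Suc j)
  show ?case
  proof (cases "i = Suc j")
    case False
    then have "xs ! i + (j - i) \<le> xs ! j" using Suc by simp
    moreover have "xs ! j < xs ! Suc j"
      using assms(1) Suc.prems by (simp add: sorted_wrt_iff_nth_less)
    ultimately show ?thesis using False Suc.prems by linarith
  qed simp
qed simp

lemma sorted_wrt_less_nth_le:
  assumes "sorted_wrt (<) (qs :: nat list)" "set qs \<subseteq> {..<m + length qs}" "i < length qs"
  shows "qs ! i \<le> m + i"
proof -
  have last: "qs ! (length qs - 1) \<in> set qs"
    using assms(3) by simp
  have "qs ! i + (length qs - 1 - i) \<le> qs ! (length qs - 1)"
    using sorted_wrt_less_nth_gap[OF assms(1), of i "length qs - 1"] assms(3) by simp
  moreover from last assms(2) have "qs ! (length qs - 1) < m + length qs"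
    by blast
  ultimately show ?thesis using assms(3) by linarith
qed

lemma fa_pow_x_plus_y:
  "fa_pow (fa_add fa_x fa_y) n = (\<lambda>w. if length w = n then 1 else 0)"
proof (induction n)
  case 0
  show ?case by (auto simp: fa_one_def fa_word_def fun_eq_iff)
next
  case (Suc n)
  have letter: "fa_add fa_x fa_y u = (if length u = 1 then 1 else 0)" for u
    by (cases u) (auto simp: fa_add_def fa_x_def fa_y_def fa_word_def)
  show ?case
  proof
    fix w :: "bool list"
    have "fa_pow (fa_add fa_x fa_y) (Suc n) w =
      (\<Sum>i\<le>length w. if i = 1 then (if length w = Suc n then 1 else 0) else 0)"
      unfolding fa_pow.simps fa_mult_def Suc letter
      by (intro sum.cong) (auto simp: min_def)
    then show "fa_pow (fa_add fa_x fa_y) (Suc n) w = (if length w = Suc n then 1 else 0)"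
      by simp
  qed
qed

lemma sum_fa_word_lists_length_eq:
  "(\<Sum>v\<in>{v :: bool list. length v = n}. fa_word v w) = (if length w = n then 1 else 0)"
  using finite_lists_length_eq[of "UNIV :: bool set" n] by (simp add: fa_word_def sum.delta)

definition indicator_word :: "nat \<Rightarrow> nat set \<Rightarrow> bool list" where
  "indicator_word n S = map (\<lambda>m. m \<in> S) [0..<n]"

lemma bij_betw_indicator_word: "bij_betw (indicator_word n) (Pow {..<n}) {v. length v = n}"
  by (rule bij_betw_byWitness[where f' = "\<lambda>v. {m. m < n \<and> v ! m}"])
    (auto simp: indicator_word_def intro!: nth_equalityI)

lemma swap_letters_indicator_word:
  assumes "a < n" "b < n" "a \<in> S" "b \<notin> S \<or> b = a"
  shows "swap_letters (indicator_word n S) (Suc a) (Suc b) = indicator_word n (insert b (S - {a}))"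
  using assms
  by (auto simp: swap_letters_def indicator_word_def nth_list_update split: if_splits
      intro!: nth_equalityI)

lemma base_word_eq_indicator_word: "base_word (m + k) k = indicator_word (m + k) {m..<m + k}"
  by (auto simp: base_word_def indicator_word_def nth_append split: if_splits
      intro!: nth_equalityI)

lemma partitions_kmD:
  assumes "lam \<in> partitions_km k m"
  shows "length lam = k" "i < k \<Longrightarrow> lam ! i \<le> m"
    "i < j \<Longrightarrow> j < k \<Longrightarrow> lam ! j \<le> lam ! i"
  using assms by (auto simp: partitions_km_def sorted_wrt_iff_nth_less)

text \<open>The factor \<open>j\<close> of \<open>Q\<^sup>\<lambda>\<close> moves a letter y to position \<open>m + j - \<lambda>\<^sub>j\<close>
  (counting from 0, with \<open>m = n - k\<close>). On strictly increasing position lists below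
  \<open>m + length\<close> the same formula recovers the partition.\<close>
definition partition_positions :: "nat \<Rightarrow> nat list \<Rightarrow> nat list" where
  "partition_positions m lam = map (\<lambda>i. m + i - lam ! i) [0..<length lam]"

lemma length_partition_positions [simp]: "length (partition_positions m lam) = length lam"
  by (simp add: partition_positions_def)

lemma partition_position_less:
  assumes "lam \<in> partitions_km k m" "i < j" "j < k"
  shows "m + i - lam ! i < m + j - lam ! j"
  using partitions_kmD(2)[OF assms(1), of i] partitions_kmD(2)[OF assms(1), of j]
    partitions_kmD(3)[OF assms(1), of i j] assms(2,3)
  by linarith

lemma sorted_partition_positions:
  assumes "lam \<in> partitions_km k m"
  shows "sorted_wrt (<) (partition_positions m lam)"
  using partition_position_less[OF assms] partitions_kmD(1)[OF assms]
  by (auto simp: partition_positions_def sorted_wrt_iff_nth_less)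

lemma set_partition_positions:
  assumes "lam \<in> partitions_km k m"
  shows "set (partition_positions m lam) = (\<lambda>i. m + i - lam ! i) ` {..<k}"
  using partitions_kmD(1)[OF assms] by (auto simp: partition_positions_def)

lemma fold_swap_letters_base_word:
  assumes "lam \<in> partitions_km k m" "j \<le> k"
  shows "fold (\<lambda>j v. swap_letters v (m + j) (m + j - lam ! (j - 1))) [1..<Suc j]
      (base_word (m + k) k)
    = indicator_word (m + k) ((\<lambda>i. m + i - lam ! i) ` {..<j} \<union> {m + j..<m + k})"
  using assms(2)
proof (induction j)
  case 0
  show ?case by (simp add: base_word_eq_indicator_word)
next
  case (Suc j)
  let ?q = "\<lambda>i. m + i - lam ! i"
  let ?T = "?q ` {..<j} \<union> {m + j..<m + k}"
  have j: "j < k" using Suc.prems by simp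
  have q_le: "?q j \<le> m + j" by simp
  have earlier: "?q i < ?q j" if "i < j" for i
    using partition_position_less[OF assms(1) that j] .
  have below: "?q i < m + j" if "i < j" for i
    using earlier[OF that] q_le by linarith
  have "?q j \<notin> ?q ` {..<j}"
  proof
    assume "?q j \<in> ?q ` {..<j}"
    then obtain i where "i < j" "?q j = ?q i" by blast
    then show False using earlier[of i] by linarith
  qed
  then have fresh: "?q j \<notin> ?T \<or> ?q j = m + j"
    using q_le by auto
  from below have "?T - {m + j} = ?q ` {..<j} \<union> {m + Suc j..<m + k}"
    by auto
  then have step: "insert (?q j) (?T - {m + j}) = ?q ` {..<Suc j} \<union> {m + Suc j..<m + k}"
    by (auto simp: lessThan_Suc)
  have "fold (\<lambda>j v. swap_letters v (m + j) (m + j - lam ! (j - 1))) [1..<Suc (Suc j)]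
      (base_word (m + k) k)
      = swap_letters (indicator_word (m + k) ?T) (Suc (m + j)) (Suc (?q j))"
    using Suc j partitions_kmD(2)[OF assms(1) j] by (simp add: Suc_diff_le)
  also have "\<dots> = indicator_word (m + k) (insert (?q j) (?T - {m + j}))"
    using j fresh by (intro swap_letters_indicator_word) auto
  finally show ?case
    unfolding step .
qed

lemma apply_Q_base_word:
  assumes "lam \<in> partitions_km k m"
  shows "apply_Q (m + k) k lam (base_word (m + k) k)
    = indicator_word (m + k) (set (partition_positions m lam))"
  using fold_swap_letters_base_word[OF assms order_refl]
  by (simp add: apply_Q_def set_partition_positions[OF assms])

lemma partition_positions_involutive:
  assumes "\<And>i. i < length xs \<Longrightarrow> xs ! i \<le> m + i"
  shows "partition_positions m (partition_positions m xs) = xs"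
  using assms by (auto simp: partition_positions_def intro!: nth_equalityI)

lemma partition_positions_in_partitions_km:
  assumes "sorted_wrt (<) (qs :: nat list)" "set qs \<subseteq> {..<m + length qs}"
  shows "partition_positions m qs \<in> partitions_km (length qs) m"
  unfolding partitions_km_def
proof (intro CollectI conjI ballI)
  show "length (partition_positions m qs) = length qs"
    by (simp add: partition_positions_def)
  show "sorted_wrt (\<ge>) (partition_positions m qs)"
    unfolding sorted_wrt_iff_nth_less
  proof (intro allI impI)
    fix i j assume ij: "i < j" "j < length (partition_positions m qs)"
    then have "qs ! i + (j - i) \<le> qs ! j" "qs ! i \<le> m + i" "qs ! j \<le> m + j"
      using sorted_wrt_less_nth_gap[OF assms(1), of i j] sorted_wrt_less_nth_le[OF assms] by auto
    then show "partition_positions m qs ! j \<le> partition_positions m qs ! i"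
      using ij by (simp add: partition_positions_def)
  qed
  show "a \<le> m" if a: "a \<in> set (partition_positions m qs)" for a
  proof -
    obtain i where "i < length qs" "a = m + i - qs ! i"
      using a by (auto simp: partition_positions_def)
    then show ?thesis
      using sorted_wrt_less_idx[OF assms(1), of i] by linarith
  qed
qed

lemma bij_betw_partition_positions:
  "bij_betw (\<lambda>lam. set (partition_positions m lam)) (partitions_km k m)
    {S \<in> Pow {..<m + k}. card S = k}"
proof (rule bij_betw_byWitness[where f' = "\<lambda>S. partition_positions m (sorted_list_of_set S)"])
  have positions: "sorted_list_of_set (set (partition_positions m lam)) = partition_positions m lam"
    "card (set (partition_positions m lam)) = k"
    "set (partition_positions m lam) \<subseteq> {..<m + k}"
    if lam: "lam \<in> partitions_km k m" for lam
  proof -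
    show "sorted_list_of_set (set (partition_positions m lam)) = partition_positions m lam"
      using sorted_partition_positions[OF lam]
      by (simp add: sorted_list_of_set.idem_if_sorted_distinct strict_sorted_iff)
    show "card (set (partition_positions m lam)) = k"
      using sorted_partition_positions[OF lam] partitions_kmD(1)[OF lam]
      by (simp add: strict_sorted_iff distinct_card)
    show "set (partition_positions m lam) \<subseteq> {..<m + k}"
      using set_partition_positions[OF lam] by auto
  qed
  have sorted_list: "sorted_wrt (<) (sorted_list_of_set S)" "length (sorted_list_of_set S) = k"
    "set (sorted_list_of_set S) = S"
    if "S \<in> {S \<in> Pow {..<m + k}. card S = k}" for S
    using that finite_subset[of S "{..<m + k}"] by auto
  show "\<forall>lam \<in> partitions_km k m.
      partition_positions m (sorted_list_of_set (set (partition_positions m lam))) = lam"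
  proof
    fix lam assume lam: "lam \<in> partitions_km k m"
    have "lam ! i \<le> m + i" if "i < length lam" for i
      using partitions_kmD(1,2)[OF lam] that by fastforce
    then show "partition_positions m (sorted_list_of_set (set (partition_positions m lam))) = lam"
      using positions(1)[OF lam] partition_positions_involutive by simp
  qed
  show "\<forall>S \<in> {S \<in> Pow {..<m + k}. card S = k}.
      set (partition_positions m (partition_positions m (sorted_list_of_set S))) = S"
  proof
    fix S assume S: "S \<in> {S \<in> Pow {..<m + k}. card S = k}"
    have "sorted_list_of_set S ! i \<le> m + i" if "i < length (sorted_list_of_set S)" for i
      using sorted_wrt_less_nth_le[of "sorted_list_of_set S" m i] sorted_list[OF S] S that by auto
    then have "partition_positions m (partition_positions m (sorted_list_of_set S))
        = sorted_list_of_set S"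
      by (rule partition_positions_involutive)
    then show "set (partition_positions m (partition_positions m (sorted_list_of_set S))) = S"
      using sorted_list(3)[OF S] by simp
  qed
  show "(\<lambda>lam. set (partition_positions m lam)) ` partitions_km k m
      \<subseteq> {S \<in> Pow {..<m + k}. card S = k}"
    using positions(2,3) by (simp add: image_subset_iff)
  show "(\<lambda>S. partition_positions m (sorted_list_of_set S)) ` {S \<in> Pow {..<m + k}. card S = k}
      \<subseteq> partitions_km k m"
  proof (rule image_subsetI)
    fix S assume S: "S \<in> {S \<in> Pow {..<m + k}. card S = k}"
    then show "partition_positions m (sorted_list_of_set S) \<in> partitions_km k m"
      using partition_positions_in_partitions_km[of "sorted_list_of_set S" m] sorted_list[OF S]
      by simp
  qed
qed

lemma sum_apply_Q_base_words:
  fixes f :: "bool list \<Rightarrow> 'a :: comm_monoid_add"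
  shows "(\<Sum>k\<in>{0..n}. \<Sum>lam\<in>partitions_km k (n - k).
      f (apply_Q n k lam (base_word n k))) = (\<Sum>v\<in>{v. length v = n}. f v)"
proof -
  have "(\<Sum>v\<in>{v. length v = n}. f v) = (\<Sum>S\<in>Pow {..<n}. f (indicator_word n S))"
    by (rule sum.reindex_bij_betw[OF bij_betw_indicator_word, symmetric])
  also have "\<dots> = (\<Sum>k\<in>{0..n}. \<Sum>S\<in>{S \<in> Pow {..<n}. card S = k}. f (indicator_word n S))"
    by (rule sum.group[symmetric]) (auto dest: card_mono[rotated])
  also have "\<dots> = (\<Sum>k\<in>{0..n}. \<Sum>lam\<in>partitions_km k (n - k).
      f (apply_Q n k lam (base_word n k)))"
  proof (rule sum.cong[OF refl])
    fix k assume "k \<in> {0..n}"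
    then have n: "n = (n - k) + k" by simp
    show "(\<Sum>S\<in>{S \<in> Pow {..<n}. card S = k}. f (indicator_word n S))
      = (\<Sum>lam\<in>partitions_km k (n - k). f (apply_Q n k lam (base_word n k)))"
      using sum.reindex_bij_betw[OF bij_betw_partition_positions[of "n - k" k],
          of "\<lambda>S. f (indicator_word n S)"]
        apply_Q_base_word[of _ k "n - k"]
      by (simp flip: n)
  qed
  finally show ?thesis ..
qed

theorem theorem1:
  fixes n :: nat
  shows "fa_pow (fa_add fa_x fa_y) n =
    (\<lambda>w. \<Sum>k\<in>{0..n}. \<Sum>lam\<in>partitions_km k (n - k).
        fa_word (apply_Q n k lam (base_word n k)) w)"
proof
  fix w
  show "fa_pow (fa_add fa_x fa_y) n w = (\<Sum>k\<in>{0..n}. \<Sum>lam\<in>partitions_km k (n - k).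
      fa_word (apply_Q n k lam (base_word n k)) w)"
    using sum_apply_Q_base_words[of "\<lambda>v. fa_word v w" n]
    by (simp add: fa_pow_x_plus_y sum_fa_word_lists_length_eq)
qed

end
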